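(* Let $a,d\in\mathbb C$ and let $n\in\mathbb C$ with $d-n\in\mathbb N$. Then the polynomial $$f(a,d,n)_x=\sum_{k=0}^{d-n}\binom{a+d+x-k}{k}\binom{d+k-x}{d-n-k}\in\mathbb C[x]$$ is constant in $x$; its value depends only on $a$, $d$ and $n$.
   Context: For $z\in\mathbb C$ (or $z$ a polynomial in $x$) and $k\in\mathbb N$, the binomial coefficient is $\binom{z}{k}=\frac{z(z-1)\cdots(z-k+1)}{k!}$. *)

theory Defs
  imports Complex_Main
begin

end

theory Submission
  imports Defs "HOL-Computational_Algebra.Polynomial"
begin

text \<open>Write \<open>u = a + d + x\<close> and \<open>v = d - x\<close>, so that the sum is
  \<open>S(u, v) = \<Sum>\<^sub>k (u - k choose k) (v + k choose m - k)\<close>.  Applying Pascal's rule once to the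
  first factor and once to the second factor gives two recursions in \<open>m\<close> which together show
  \<open>S(u + 1, v - 1) = S(u, v)\<close>.  Hence the sum, a polynomial in \<open>x\<close>, takes the same value at
  every natural number \<open>x\<close>, and a polynomial with infinitely many roots is zero.\<close>

definition gchoose_diag_sum :: "'a::field_char_0 \<Rightarrow> 'a \<Rightarrow> nat \<Rightarrow> 'a" where
  "gchoose_diag_sum u v m = (\<Sum>k\<le>m. ((u - of_nat k) gchoose k) * ((v + of_nat k) gchoose (m - k)))"

lemma gchoose_diag_sum_Suc_pascal_left:
  "gchoose_diag_sum u v (Suc m) = gchoose_diag_sum (u - 1) v (Suc m) + gchoose_diag_sum (u - 2) (v + 1) m"
proof -
  have lhs: "gchoose_diag_sum u v (Suc m) = (v gchoose Suc m) +
      (\<Sum>k\<le>m. ((u - of_nat (Suc k)) gchoose Suc k) * ((v + of_nat (Suc k)) gchoose (m - k)))"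
    unfolding gchoose_diag_sum_def by (subst sum.atMost_Suc_shift) simp
  have rhs1: "gchoose_diag_sum (u - 1) v (Suc m) = (v gchoose Suc m) +
      (\<Sum>k\<le>m. ((u - 1 - of_nat (Suc k)) gchoose Suc k) * ((v + of_nat (Suc k)) gchoose (m - k)))"
    unfolding gchoose_diag_sum_def by (subst sum.atMost_Suc_shift) simp
  have rhs2: "gchoose_diag_sum (u - 2) (v + 1) m =
      (\<Sum>k\<le>m. ((u - 1 - of_nat (Suc k)) gchoose k) * ((v + of_nat (Suc k)) gchoose (m - k)))"
    unfolding gchoose_diag_sum_def by (rule sum.cong) (simp_all add: algebra_simps)
  have pascal: "(u - of_nat (Suc k)) gchoose Suc k =
      ((u - 1 - of_nat (Suc k)) gchoose Suc k) + ((u - 1 - of_nat (Suc k)) gchoose k)" for k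
    using gbinomial_addition_formula[of "u - of_nat (Suc k)" k] by (simp add: algebra_simps)
  show ?thesis
    unfolding lhs rhs1 rhs2 pascal distrib_right sum.distrib by (rule add.assoc[symmetric])
qed

lemma gchoose_diag_sum_Suc_pascal_right:
  "gchoose_diag_sum u v (Suc m) = gchoose_diag_sum u (v - 1) (Suc m) + gchoose_diag_sum u (v - 1) m"
proof -
  have lhs: "gchoose_diag_sum u v (Suc m) =
      (\<Sum>k\<le>m. ((u - of_nat k) gchoose k) * ((v + of_nat k) gchoose Suc (m - k)))
      + ((u - of_nat (Suc m)) gchoose Suc m)"
    unfolding gchoose_diag_sum_def by (simp add: Suc_diff_le)
  have rhs1: "gchoose_diag_sum u (v - 1) (Suc m) =
      (\<Sum>k\<le>m. ((u - of_nat k) gchoose k) * ((v - 1 + of_nat k) gchoose Suc (m - k)))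
      + ((u - of_nat (Suc m)) gchoose Suc m)"
    unfolding gchoose_diag_sum_def by (simp add: Suc_diff_le)
  have rhs2: "gchoose_diag_sum u (v - 1) m =
      (\<Sum>k\<le>m. ((u - of_nat k) gchoose k) * ((v - 1 + of_nat k) gchoose (m - k)))"
    unfolding gchoose_diag_sum_def ..
  have pascal: "(v + of_nat k) gchoose Suc j =
      ((v - 1 + of_nat k) gchoose Suc j) + ((v - 1 + of_nat k) gchoose j)" for k j
    using gbinomial_addition_formula[of "v + of_nat k" j] by (simp add: algebra_simps)
  show ?thesis
    unfolding lhs rhs1 rhs2 pascal distrib_left sum.distrib by (simp only: ac_simps)
qed

lemma gchoose_diag_sum_shift: "gchoose_diag_sum (u + 1) (v - 1) m = gchoose_diag_sum u v m"
proof (induction m arbitrary: u v)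
  case 0
  show ?case by (simp add: gchoose_diag_sum_def)
next
  case (Suc m)
  have "gchoose_diag_sum (u + 1) (v - 1) (Suc m)
      = gchoose_diag_sum u (v - 1) (Suc m) + gchoose_diag_sum (u - 1) v m"
    using gchoose_diag_sum_Suc_pascal_left[of "u + 1" "v - 1" m] by simp
  also have "gchoose_diag_sum (u - 1) v m = gchoose_diag_sum u (v - 1) m"
    using Suc.IH[of "u - 1" v] by simp
  also have "gchoose_diag_sum u (v - 1) (Suc m) + \<dots> = gchoose_diag_sum u v (Suc m)"
    by (rule gchoose_diag_sum_Suc_pascal_right[symmetric])
  finally show ?case .
qed

lemma gchoose_diag_sum_shift_of_nat:
  "gchoose_diag_sum (u + of_nat t) (v - of_nat t) m = gchoose_diag_sum u v m"
proof (induction t)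
  case 0
  show ?case by simp
next
  case (Suc t)
  have "gchoose_diag_sum (u + of_nat (Suc t)) (v - of_nat (Suc t)) m
      = gchoose_diag_sum (u + of_nat t + 1) (v - of_nat t - 1) m"
    by (simp add: algebra_simps)
  also have "\<dots> = gchoose_diag_sum (u + of_nat t) (v - of_nat t) m"
    by (rule gchoose_diag_sum_shift)
  finally show ?case using Suc.IH by simp
qed

definition gchoose_poly :: "'a::field_char_0 \<Rightarrow> 'a \<Rightarrow> nat \<Rightarrow> 'a poly" where
  "gchoose_poly c e k = smult (1 / fact k) (\<Prod>i<k. [:c - of_nat i, e:])"

lemma poly_gchoose_poly: "poly (gchoose_poly c e k) x = (c + e * x) gchoose k"
  by (simp add: gchoose_poly_def gbinomial_prod_rev poly_prod atLeast0LessThan algebra_simps)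

lemma poly_const_if_const_on_nat:
  fixes p :: "'a::{idom, ring_char_0} poly"
  assumes "\<And>t::nat. poly p (of_nat t) = c"
  shows "poly p x = c"
proof -
  have "range (of_nat :: nat \<Rightarrow> 'a) \<subseteq> {x. poly (p - [:c:]) x = 0}"
    using assms by (auto simp del: of_nat_eq_iff)
  moreover have "infinite (range (of_nat :: nat \<Rightarrow> 'a))"
    using finite_imageD[OF _ inj_of_nat] by blast
  ultimately have "infinite {x. poly (p - [:c:]) x = 0}"
    using finite_subset by blast
  then have "p - [:c:] = 0"
    using poly_roots_finite by blast
  then show ?thesis by simp
qed

theorem theorem4p2:
  fixes a d n :: complex and m :: nat
  assumes "d - n = of_nat m"
  shows "\<exists>c::complex. \<forall>x::complex.
           (\<Sum>k=0..m. ((a + d + x - of_nat k) gchoose k) * ((d + of_nat k - x) gchoose (m - k))) = c"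
proof -
  define p where "p = (\<Sum>k\<le>m. gchoose_poly (a + d - of_nat k) 1 k * gchoose_poly (d + of_nat k) (-1) (m - k))"
  have sum_eq: "(\<Sum>k=0..m. ((a + d + x - of_nat k) gchoose k) * ((d + of_nat k - x) gchoose (m - k)))
      = gchoose_diag_sum (a + d + x) (d - x) m" for x
    unfolding gchoose_diag_sum_def atLeast0AtMost by (rule sum.cong) (simp_all add: algebra_simps)
  have poly_p: "poly p x = gchoose_diag_sum (a + d + x) (d - x) m" for x
    unfolding p_def gchoose_diag_sum_def poly_sum poly_mult poly_gchoose_poly
    by (rule sum.cong) (simp_all add: algebra_simps)
  have "poly p (of_nat t) = gchoose_diag_sum (a + d) d m" for t
    unfolding poly_p by (rule gchoose_diag_sum_shift_of_nat)
  then have "poly p x = gchoose_diag_sum (a + d) d m" for x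
    by (rule poly_const_if_const_on_nat)
  then show ?thesis
    unfolding sum_eq poly_p[symmetric] by blast
qed

end
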